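(* Let $p$ be a prime, let $q$ be a rational number and let $a$ be a positive integer. Then the number of $d \in \{0, \ldots, p-1\}$ such that $$\sum_{i=a}^{a+d} \frac{1}{c_p(i)} \equiv q \pmod p$$ is less than $p^{0.835}$.
   Context: $c_p(1) < c_p(2) < \cdots$ denotes the increasing sequence of all positive integers not divisible by $p$. For rational numbers $x, y$, $x \equiv y \pmod p$ means $\nu_p(x - y) > 0$, where $\nu_p$ is the $p$-adic valuation. *)

theory Defs
  imports Complex_Main "HOL-Library.Infinite_Set" "HOL-Computational_Algebra.Primes"
begin

text \<open>c_p(i), i >= 1: the i-th smallest positive integer not divisible by p
  (enumerate is 0-indexed, hence i - 1).\<close>
definition cp :: "nat \<Rightarrow> nat \<Rightarrow> nat" where
  "cp p i = enumerate {n::nat. 0 < n \<and> \<not> p dvd n} (i - 1)"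

definition padic_val_rat :: "nat \<Rightarrow> rat \<Rightarrow> int" where
  "padic_val_rat p x = (let (a, b) = quotient_of x in
      int (multiplicity (int p) a) - int (multiplicity (int p) b))"

text \<open>x == y (mod p) iff nu_p(x - y) > 0 (with nu_p(0) = +infinity).\<close>
definition rat_cong_p :: "rat \<Rightarrow> rat \<Rightarrow> nat \<Rightarrow> bool" where
  "rat_cong_p x y p \<longleftrightarrow> x = y \<or> padic_val_rat p (x - y) > 0"

end

theory Submission
  imports Defs "HOL-Computational_Algebra.Polynomial"
begin

text \<open>If \<open>d\<close> and \<open>d + j\<close> both solve the congruence, the sum of \<open>1 / c\<^sub>p(i)\<close> over the
  \<open>j\<close> indices in between is \<open>\<equiv> 0 (mod p)\<close>. On a stretch where \<open>c\<^sub>p(a + x) = a + x + K\<close>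
  this sum is \<open>P\<^sub>j(y) / Q\<^sub>j(y)\<close> with \<open>y = a + x + K\<close>, \<open>Q\<^sub>j = (X + 1) \<cdots> (X + j)\<close> and
  \<open>P\<^sub>j = Q\<^sub>j'\<close>, a polynomial of degree \<open>j - 1\<close> with leading coefficient \<open>j\<close>; so for
  \<open>0 < j < p\<close> at most \<open>j - 1\<close> solutions have a partner \<open>j\<close> steps above them in such a stretch.
  The window \<open>[0, p)\<close> is the union of two stretches, and counting the solutions without a
  partner closer than \<open>T\<close> gives \<open>T N \<le> p + O(T\<^sup>3)\<close> for every \<open>T\<close>, where \<open>N\<close> is the number
  of solutions. Together with \<open>2 N \<le> p + 1\<close> (no two solutions are adjacent) the choice
  \<open>T \<approx> N\<^sup>1\<^sup>/\<^sup>5\<close> yields \<open>N\<^sup>6 < p\<^sup>5\<close>, and \<open>5/6 < 0.835\<close>.\<close>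

lemma enumerate_range_strict_mono:
  fixes f :: "nat \<Rightarrow> nat"
  assumes "strict_mono f"
  shows "enumerate (range f) n = f n"
proof (induction n)
  case 0
  show ?case
    unfolding enumerate_0
    by (rule Least_equality) (auto simp: strict_mono_less_eq[OF assms])
next
  case (Suc n)
  have "infinite (range f)"
    using range_inj_infinite strict_mono_imp_inj_on[OF assms] by blast
  then have "enumerate (range f) (Suc n) = (LEAST s. s \<in> range f \<and> f n < s)"
    by (simp add: enumerate_Suc'' Suc.IH)
  also have "\<dots> = f (Suc n)"
    by (rule Least_equality)
      (auto simp: strict_mono_less[OF assms] strict_mono_less_eq[OF assms] Suc_le_eq)
  finally show ?case .
qed

lemma not_dvd_positives_eq_range:
  fixes p :: nat
  assumes "p \<ge> 2"
  shows "{n. 0 < n \<and> \<not> p dvd n} = range (\<lambda>n. Suc n + n div (p - 1))"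
proof (intro set_eqI iffI)
  fix y assume y: "y \<in> {n. 0 < n \<and> \<not> p dvd n}"
  obtain m where m: "p = Suc m" using assms by (cases p) auto
  obtain r where r: "y mod p = Suc r"
    using y by (metis dvd_eq_mod_eq_0 mem_Collect_eq not0_implies_Suc)
  define k where "k = y div p"
  have "y = k * p + Suc r" "Suc r < p"
    using assms div_mult_mod_eq[of y p] mod_less_divisor[of p y] by (simp_all add: k_def r)
  then have "y = Suc (k * m + r) + (k * m + r) div m"
    using div_mult_self1[of m r k] by (simp add: m add.commute)
  then show "y \<in> range (\<lambda>n. Suc n + n div (p - 1))" by (auto simp: m)
next
  fix y assume "y \<in> range (\<lambda>n. Suc n + n div (p - 1))"
  then obtain n where y: "y = Suc n + n div (p - 1)" by blast
  obtain m where m: "p = Suc m" "m > 0" using assms by (cases p) auto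
  have "y = n div m * p + Suc (n mod m)"
    using div_mult_mod_eq[of n m] by (simp add: y m algebra_simps)
  moreover have "Suc (n mod m) < p" using m by simp
  ultimately have "y mod p = Suc (n mod m)" by simp
  then show "y \<in> {n. 0 < n \<and> \<not> p dvd n}" by (auto simp: y dvd_eq_mod_eq_0)
qed

lemma cp_eq_Suc:
  assumes "p \<ge> 2"
  shows "cp p i = Suc (i - 1) + (i - 1) div (p - 1)"
proof -
  have "strict_mono (\<lambda>n. Suc n + n div (p - 1))"
    by (intro strict_monoI) (simp add: add_less_le_mono div_le_mono)
  then show ?thesis
    using assms by (simp add: cp_def not_dvd_positives_eq_range enumerate_range_strict_mono)
qed

lemma cp_eq:
  assumes "p \<ge> 2" "i \<ge> 1"
  shows "cp p i = i + (i - 1) div (p - 1)"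
  using cp_eq_Suc[OF assms(1)] assms(2) by simp

lemma cp_not_dvd:
  assumes "p \<ge> 2"
  shows "\<not> p dvd cp p i"
  using not_dvd_positives_eq_range[OF assms] cp_eq_Suc[OF assms, of i] by blast

text \<open>The ideal \<open>p\<int>\<^sub>(\<^sub>p\<^sub>)\<close> of rationals of positive \<open>p\<close>-adic valuation (and \<open>0\<close>); unlike
  \<open>rat_cong_p\<close>, membership needs no reduced fraction, so closure under subtraction is easy.\<close>
definition in_pZp :: "nat \<Rightarrow> rat \<Rightarrow> bool" where
  "in_pZp p x \<longleftrightarrow> (\<exists>u w :: int. \<not> int p dvd w \<and> int p dvd u \<and> x = of_int u / of_int w)"

lemma rat_cong_p_imp_in_pZp:
  assumes "prime p" "rat_cong_p x y p"
  shows "in_pZp p (x - y)"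
proof (cases "x = y")
  case True
  then show ?thesis
    using assms(1) unfolding in_pZp_def
    by (intro exI[of _ 0] exI[of _ 1]) (auto simp: prime_gt_1_nat)
next
  case False
  obtain u w where uw: "quotient_of (x - y) = (u, w)" by fastforce
  have "padic_val_rat p (x - y) > 0"
    using assms(2) False by (simp add: rat_cong_p_def)
  then have "multiplicity (int p) u \<ge> 1"
    by (simp add: padic_val_rat_def uw)
  then have "int p dvd u"
    using multiplicity_dvd'[of 1 "int p" u] by simp
  moreover have "\<not> int p dvd w"
  proof
    assume "int p dvd w"
    with \<open>int p dvd u\<close> quotient_of_coprime[OF uw] have "is_unit (int p)"
      by (meson coprime_common_divisor)
    then show False using assms(1) by (simp add: prime_gt_1_nat)
  qed
  ultimately show ?thesis
    unfolding in_pZp_def using quotient_of_div[OF uw] by blast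
qed

lemma in_pZp_diff:
  assumes "prime p" "in_pZp p x" "in_pZp p y"
  shows "in_pZp p (x - y)"
proof -
  obtain u w where uw: "\<not> int p dvd w" "int p dvd u" "x = of_int u / of_int w"
    using assms(2) unfolding in_pZp_def by blast
  obtain u' w' where uw': "\<not> int p dvd w'" "int p dvd u'" "y = of_int u' / of_int w'"
    using assms(3) unfolding in_pZp_def by blast
  have "w \<noteq> 0" "w' \<noteq> 0" using uw(1) uw'(1) by auto
  then have "x - y = of_int (u * w' - u' * w) / of_int (w * w')"
    by (simp add: uw(3) uw'(3) field_simps)
  moreover have "\<not> int p dvd w * w'"
    using assms(1) uw(1) uw'(1) by (simp add: prime_dvd_mult_iff)
  moreover have "int p dvd u * w' - u' * w"
    using uw(2) uw'(2) by simp
  ultimately show ?thesis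
    unfolding in_pZp_def by blast
qed

lemma in_pZp_fraction_imp_dvd:
  assumes "prime p" "\<not> int p dvd Q" "in_pZp p (of_int P / of_int Q)"
  shows "int p dvd P"
proof -
  obtain u w where uw: "\<not> int p dvd w" "int p dvd u" "of_int P / of_int Q = (of_int u / of_int w :: rat)"
    using assms(3) unfolding in_pZp_def by blast
  have "Q \<noteq> 0" "w \<noteq> 0" using assms(2) uw(1) by auto
  then have "P * w = u * Q"
    using uw(3) by (simp add: field_simps flip: of_int_mult of_int_eq_iff)
  then have "int p dvd P * w" using uw(2) by simp
  then show ?thesis using assms(1) uw(1) by (simp add: prime_dvd_mult_iff)
qed

lemma card_roots_mod_prime_le_degree:
  fixes f :: "int poly" and p :: int and X :: "int set"
  assumes "prime p" and "\<nexists>h. f = smult p h" and "finite X"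
    and "\<forall>x\<in>X. \<forall>y\<in>X. x \<noteq> y \<longrightarrow> \<not> p dvd (x - y)"
    and "\<forall>x\<in>X. p dvd poly f x"
  shows "card X \<le> degree f"
  using assms(2-)
proof (induction "degree f" arbitrary: f X)
  case 0
  then obtain c where f: "f = [:c:]" by (metis degree_eq_zeroE)
  have "X = {}"
  proof
    show "X \<subseteq> {}"
    proof
      fix x assume "x \<in> X"
      then obtain k where k: "c = p * k" using "0.prems"(4) f by auto
      have "\<exists>h. f = smult p h" by (intro exI[of _ "[:k:]"]) (simp add: f k)
      with "0.prems"(1) show "x \<in> {}" by contradiction
    qed
  qed simp
  then show ?case by simp
next
  case (Suc n)
  show ?case
  proof (cases "X = {}")
    case False
    then obtain r where r: "r \<in> X" by blast
    define g where "g = synthetic_div f r"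
    have f: "f = [:-r, 1:] * g + [:poly f r:]"
      unfolding g_def by (rule synthetic_div_correct'[symmetric])
    obtain k where k: "poly f r = p * k" using Suc.prems(4) r by blast
    have g_primitive: "\<nexists>h. g = smult p h"
    proof
      assume "\<exists>h. g = smult p h"
      then obtain h where "g = smult p h" by blast
      then have "f = smult p ([:-r, 1:] * h + [:k:])"
        by (subst f) (simp add: k smult_add_right)
      then show False using Suc.prems(1) by blast
    qed
    have g_roots: "\<forall>x\<in>X - {r}. p dvd poly g x"
    proof
      fix x assume x: "x \<in> X - {r}"
      have "poly f x = (x - r) * poly g x + poly f r"
        by (subst f) (simp add: algebra_simps)
      then have "p dvd (x - r) * poly g x"
        using Suc.prems(4) x r by (metis DiffD1 add_diff_cancel_right' dvd_diff)
      moreover have "\<not> p dvd (x - r)" using Suc.prems(3) x r by blast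
      ultimately show "p dvd poly g x" using assms(1) by (simp add: prime_dvd_mult_iff)
    qed
    have "n = degree g"
      using Suc.hyps(2) by (simp add: g_def degree_synthetic_div)
    moreover have "finite (X - {r})" using Suc.prems(2) by simp
    moreover have "\<forall>x\<in>X - {r}. \<forall>y\<in>X - {r}. x \<noteq> y \<longrightarrow> \<not> p dvd (x - y)"
      using Suc.prems(3) by blast
    ultimately have "card (X - {r}) \<le> n"
      using Suc.hyps(1)[OF _ g_primitive _ _ g_roots] by simp
    then show ?thesis using Suc.hyps(2) Suc.prems(2) r by (simp add: card_Diff_singleton)
  qed simp
qed

definition rising_poly :: "nat \<Rightarrow> int poly" where
  "rising_poly j = (\<Prod>t\<in>{1..j}. [:int t, 1:])"

lemma degree_rising_poly: "degree (rising_poly j) = j"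
  unfolding rising_poly_def by (subst degree_prod_sum_eq) auto

lemma coeff_pderiv_rising_poly: "coeff (pderiv (rising_poly j)) (j - 1) = int j"
proof -
  have "coeff (rising_poly j) j = 1"
    using lead_coeff_prod[of "\<lambda>t. [:int t, 1:]" "{1..j}"] degree_rising_poly[of j]
    by (simp add: rising_poly_def)
  then show ?thesis by (cases j) (simp add: rising_poly_def, simp add: coeff_pderiv)
qed

lemma poly_rising_poly: "poly (rising_poly j) y = (\<Prod>t\<in>{1..j}. y + int t)"
  by (simp add: rising_poly_def poly_prod add.commute)

lemma poly_pderiv_rising_poly:
  "poly (pderiv (rising_poly j)) y = (\<Sum>s\<in>{1..j}. \<Prod>t\<in>{1..j} - {s}. y + int t)"
  by (simp add: rising_poly_def pderiv_prod pderiv_pCons poly_sum poly_prod add.commute)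

lemma sum_inverse_shifts_eq:
  assumes "\<forall>t\<in>{1..j}. y + int t \<noteq> 0"
  shows "(\<Sum>s\<in>{1..j}. 1 / (of_int y + of_nat s) :: rat)
    = of_int (poly (pderiv (rising_poly j)) y) / of_int (poly (rising_poly j) y)"
proof -
  have nz: "(of_int y + of_nat t :: rat) \<noteq> 0" if "t \<in> {1..j}" for t
    using assms that by (metis of_int_eq_0_iff of_int_of_nat_eq of_int_add)
  have "(\<Sum>s\<in>{1..j}. 1 / (of_int y + of_nat s) :: rat)
      = (\<Sum>s\<in>{1..j}. (\<Prod>t\<in>{1..j} - {s}. of_int y + of_nat t) / (\<Prod>t\<in>{1..j}. of_int y + of_nat t))"
  proof (rule sum.cong[OF refl])
    fix s assume s: "s \<in> {1..j}"
    have "(\<Prod>t\<in>{1..j} - {s}. of_int y + of_nat t :: rat) \<noteq> 0"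
      using nz by simp
    moreover have "(\<Prod>t\<in>{1..j}. of_int y + of_nat t :: rat)
        = (of_int y + of_nat s) * (\<Prod>t\<in>{1..j} - {s}. of_int y + of_nat t)"
      using s by (simp add: prod.remove)
    ultimately show "1 / (of_int y + of_nat s) = (\<Prod>t\<in>{1..j} - {s}. of_int y + of_nat t) / (\<Prod>t\<in>{1..j}. of_int y + of_nat t :: rat)"
      using nz[OF s] by simp
  qed
  then show ?thesis
    by (simp add: poly_rising_poly poly_pderiv_rising_poly sum_divide_distrib)
qed

lemma card_harmonic_zeros_le:
  fixes Y :: "int set"
  assumes p: "prime p" and j: "0 < j" "j < p" and "finite Y"
    and "\<forall>x\<in>Y. \<forall>y\<in>Y. x \<noteq> y \<longrightarrow> \<not> int p dvd (x - y)"
    and units: "\<forall>y\<in>Y. \<forall>s\<in>{1..j}. \<not> int p dvd (y + int s)"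
    and zeros: "\<forall>y\<in>Y. in_pZp p (\<Sum>s\<in>{1..j}. 1 / (of_int y + of_nat s))"
  shows "card Y \<le> j - 1"
proof -
  have "\<nexists>h. pderiv (rising_poly j) = smult (int p) h"
  proof
    assume "\<exists>h. pderiv (rising_poly j) = smult (int p) h"
    then obtain h where "pderiv (rising_poly j) = smult (int p) h" by blast
    then have "int p dvd int j"
      using coeff_pderiv_rising_poly[of j] by (metis coeff_smult dvd_triv_left)
    then show False using j by (simp add: nat_dvd_not_less)
  qed
  moreover have "int p dvd poly (pderiv (rising_poly j)) y" if y: "y \<in> Y" for y
  proof -
    have "\<forall>t\<in>{1..j}. y + int t \<noteq> 0"
      using units y by fastforce
    then have "(\<Sum>s\<in>{1..j}. 1 / (of_int y + of_nat s) :: rat)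
        = of_int (poly (pderiv (rising_poly j)) y) / of_int (poly (rising_poly j) y)"
      by (rule sum_inverse_shifts_eq)
    moreover have "in_pZp p (\<Sum>s\<in>{1..j}. 1 / (of_int y + of_nat s))"
      using zeros y by blast
    ultimately have "in_pZp p (of_int (poly (pderiv (rising_poly j)) y) / of_int (poly (rising_poly j) y))"
      by simp
    moreover have "\<not> int p dvd poly (rising_poly j) y"
      using units y p by (simp add: poly_rising_poly prime_dvd_prod_iff)
    ultimately show ?thesis
      using in_pZp_fraction_imp_dvd[OF p] by blast
  qed
  ultimately have "card Y \<le> degree (pderiv (rising_poly j))"
    using card_roots_mod_prime_le_degree[of "int p"] assms by simp
  then show ?thesis by (simp add: degree_pderiv degree_rising_poly)
qed

definition cp_sum :: "nat \<Rightarrow> nat \<Rightarrow> nat \<Rightarrow> rat" where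
  "cp_sum p a d = (\<Sum>i = a..a + d. 1 / of_nat (cp p i))"

definition cp_solutions :: "nat \<Rightarrow> rat \<Rightarrow> nat \<Rightarrow> nat set \<Rightarrow> nat set" where
  "cp_solutions p q a I = {d \<in> I. rat_cong_p (cp_sum p a d) q p}"

lemma cp_sum_add:
  "cp_sum p a (d + j) = cp_sum p a d + (\<Sum>s\<in>{1..j}. 1 / of_nat (cp p (a + d + s)))"
  by (induction j) (simp_all add: cp_sum_def add.assoc)

lemma in_pZp_cp_sum_gap:
  assumes p: "prime p" and "d \<in> cp_solutions p q a I" "d + j \<in> cp_solutions p q a I"
  shows "in_pZp p (\<Sum>s\<in>{1..j}. 1 / of_nat (cp p (a + d + s)))"
proof -
  have "rat_cong_p (cp_sum p a (d + j)) q p" "rat_cong_p (cp_sum p a d) q p"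
    using assms(2,3) by (simp_all add: cp_solutions_def)
  then have "in_pZp p ((cp_sum p a (d + j) - q) - (cp_sum p a d - q))"
    by (intro in_pZp_diff[OF p] rat_cong_p_imp_in_pZp[OF p])
  then show ?thesis by (simp add: cp_sum_add)
qed

lemma cp_solutions_not_consecutive:
  assumes p: "prime p" and "d \<in> cp_solutions p q a I"
  shows "d + 1 \<notin> cp_solutions p q a I"
proof
  assume "d + 1 \<in> cp_solutions p q a I"
  then have "in_pZp p (of_int 1 / of_int (int (cp p (a + d + 1))))"
    using in_pZp_cp_sum_gap[OF assms, of 1] by simp
  moreover have "\<not> int p dvd int (cp p (a + d + 1))"
    using cp_not_dvd[OF prime_ge_2_nat[OF p]] by simp
  ultimately have "int p dvd 1"
    by (intro in_pZp_fraction_imp_dvd[OF p])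
  then show False using p by (simp add: prime_gt_1_nat)
qed

lemma not_dvd_diff_in_window:
  fixes u v :: nat
  assumes "u \<in> {lo..<lo + L}" "v \<in> {lo..<lo + L}" "L \<le> p" "u \<noteq> v"
  shows "\<not> int p dvd (int u - int v)"
proof
  assume "int p dvd int u - int v"
  moreover have "\<bar>int u - int v\<bar> < int p" using assms(1-3) by auto
  ultimately show False
    using dvd_imp_le_int[of "int u - int v" "int p"] assms(4) by simp
qed

lemma card_cp_solution_pairs_le:
  assumes p: "prime p" and L: "L \<le> p" and j: "0 < j"
    and shift: "\<forall>x\<in>{lo..<lo + L}. cp p (a + x) = a + x + K"
  shows "card {x \<in> cp_solutions p q a {lo..<lo + L}. x + j \<in> cp_solutions p q a {lo..<lo + L}}
    \<le> j - 1" (is "card ?B \<le> _")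
proof (cases "j < p")
  case False
  then have "?B = {}" using L by (auto simp: cp_solutions_def)
  then show ?thesis by (metis card.empty le0)
next
  case True
  have B: "lo \<le> x" "x + j < lo + L" if "x \<in> ?B" for x
    using that by (auto simp: cp_solutions_def)
  have cp_B: "cp p (a + x + s) = a + x + K + s" if "x \<in> ?B" "s \<in> {1..j}" for x s
    using shift B[OF that(1)] that(2) by (force simp: add.assoc)
  define Y where "Y = (\<lambda>x. int (a + x + K)) ` ?B"
  have "card Y = card ?B"
    unfolding Y_def by (rule card_image) (simp add: inj_on_def)
  moreover have "card Y \<le> j - 1"
  proof (rule card_harmonic_zeros_le[OF p j True])
    show "finite Y" by (simp add: Y_def cp_solutions_def)
    show "\<forall>y\<in>Y. \<forall>z\<in>Y. y \<noteq> z \<longrightarrow> \<not> int p dvd (y - z)"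
    proof (intro ballI impI)
      fix y z assume "y \<in> Y" "z \<in> Y" "y \<noteq> z"
      then obtain u v where "u \<in> ?B" "v \<in> ?B" "u \<noteq> v" "y - z = int u - int v"
        unfolding Y_def by auto
      then show "\<not> int p dvd (y - z)"
        using not_dvd_diff_in_window[OF _ _ L, of u lo v] by (simp add: cp_solutions_def)
    qed
    show "\<forall>y\<in>Y. \<forall>s\<in>{1..j}. \<not> int p dvd (y + int s)"
    proof (intro ballI)
      fix y s assume "y \<in> Y" "s \<in> {1..j}"
      then obtain x where "x \<in> ?B" "y = int (a + x + K)" unfolding Y_def by blast
      then have "y + int s = int (cp p (a + x + s))" using cp_B \<open>s \<in> {1..j}\<close> by simp
      then show "\<not> int p dvd (y + int s)" using cp_not_dvd[OF prime_ge_2_nat[OF p]] by simp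
    qed
    show "\<forall>y\<in>Y. in_pZp p (\<Sum>s\<in>{1..j}. 1 / (of_int y + of_nat s))"
    proof
      fix y assume "y \<in> Y"
      then obtain x where x: "x \<in> ?B" "y = int (a + x + K)" unfolding Y_def by blast
      have "in_pZp p (\<Sum>s\<in>{1..j}. 1 / of_nat (cp p (a + x + s)))"
        using in_pZp_cp_sum_gap[OF p] x(1) by blast
      also have "(\<Sum>s\<in>{1..j}. 1 / of_nat (cp p (a + x + s))) = (\<Sum>s\<in>{1..j}. 1 / (of_int y + of_nat s))"
        using cp_B[OF x(1)] by (simp add: x(2))
      finally show "in_pZp p (\<Sum>s\<in>{1..j}. 1 / (of_int y + of_nat s))" .
    qed
  qed
  ultimately show ?thesis by simp
qed

text \<open>The elements of \<open>A\<close> with no other element of \<open>A\<close> less than \<open>T\<close> steps above them have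
  pairwise disjoint \<open>T\<close>-translates inside a window of length \<open>L + T - 1\<close>; every other element
  is counted by some pair \<open>x, x + j\<close> with \<open>j < T\<close>.\<close>
lemma card_le_window_plus_pairs:
  fixes A :: "nat set"
  assumes A: "A \<subseteq> {lo..<lo + L}" and "0 < T"
  shows "T * card A \<le> L + T - 1 + T * (\<Sum>j\<in>{1..<T}. card {x \<in> A. x + j \<in> A})"
proof -
  have "finite A" using A finite_subset by blast
  define E where "E = {x \<in> A. \<forall>j\<in>{1..<T}. x + j \<notin> A}"
  have "E \<subseteq> A" unfolding E_def by blast
  have "card (A - E) \<le> card (\<Union>j\<in>{1..<T}. {x \<in> A. x + j \<in> A})"
    using \<open>finite A\<close> by (intro card_mono) (auto simp: E_def)
  also have "\<dots> \<le> (\<Sum>j\<in>{1..<T}. card {x \<in> A. x + j \<in> A})"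
    by (rule card_UN_le) simp
  finally have pairs: "card (A - E) \<le> (\<Sum>j\<in>{1..<T}. card {x \<in> A. x + j \<in> A})" .
  have "inj_on (\<lambda>(x, i). x + i) (E \<times> {..<T})"
  proof (rule inj_onI, clarify)
    fix x i y i' assume xy: "x \<in> E" "i < T" "y \<in> E" "i' < T" "x + i = y + i'"
    show "x = y \<and> i = i'"
    proof (cases x y rule: linorder_cases)
      case less
      then have "y = x + (i - i')" "i - i' \<in> {1..<T}" using xy by auto
      then show ?thesis using xy(1,3) unfolding E_def by blast
    next
      case greater
      then have "x = y + (i' - i)" "i' - i \<in> {1..<T}" using xy by auto
      then show ?thesis using xy(1,3) unfolding E_def by blast
    qed (use xy in simp)
  qed
  moreover have "(\<lambda>(x, i). x + i) ` (E \<times> {..<T}) \<subseteq> {lo..<lo + L + T - 1}"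
    using \<open>E \<subseteq> A\<close> A by fastforce
  ultimately have "card (E \<times> {..<T}) \<le> card {lo..<lo + L + T - 1}"
    by (intro card_inj_on_le) auto
  then have "T * card E \<le> L + T - 1"
    by (simp add: card_cartesian_product mult.commute)
  moreover have "card A = card E + card (A - E)"
    using \<open>finite A\<close> \<open>E \<subseteq> A\<close> by (metis card_Diff_subset card_mono finite_subset le_add_diff_inverse)
  ultimately show ?thesis
    using pairs by (simp add: algebra_simps add_mono)
qed

lemma two_sum_pred_eq: "2 * (\<Sum>j\<in>{1..<T}. j - 1) = (T - 1) * (T - 2 :: nat)"
proof (induction T)
  case (Suc T)
  then show ?case by (cases T) (auto simp: algebra_simps)
qed simp

lemma card_cp_solutions_window_le:
  assumes "prime p" "L \<le> p" "0 < T"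
    and "\<forall>x\<in>{lo..<lo + L}. cp p (a + x) = a + x + K"
  shows "2 * (T * card (cp_solutions p q a {lo..<lo + L}))
    \<le> 2 * (L + T - 1) + T * ((T - 1) * (T - 2))"
proof -
  let ?A = "cp_solutions p q a {lo..<lo + L}"
  let ?S = "\<Sum>j\<in>{1..<T}. card {x \<in> ?A. x + j \<in> ?A}"
  have "T * card ?A \<le> L + T - 1 + T * ?S"
    using assms(3) by (intro card_le_window_plus_pairs) (auto simp: cp_solutions_def)
  also have "?S \<le> (\<Sum>j\<in>{1..<T}. j - 1)"
    using card_cp_solution_pairs_le[OF assms(1,2) _ assms(4)] by (intro sum_mono) simp
  finally have "2 * (T * card ?A) \<le> 2 * (L + T - 1) + T * (2 * (\<Sum>j\<in>{1..<T}. j - 1))"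
    by simp
  then show ?thesis by (simp only: two_sum_pred_eq)
qed

lemma cp_window_split:
  assumes "p \<ge> 2" "0 < a"
  obtains b K where "b \<le> p"
    and "\<forall>x\<in>{0..<b}. cp p (a + x) = a + x + K"
    and "\<forall>x\<in>{b..<p}. cp p (a + x) = a + x + (K + 1)"
proof
  define m where "m = p - 1"
  have m: "0 < m" "p = m + 1" using assms(1) by (simp_all add: m_def)
  define K r where "K = (a - 1) div m" and "r = (a - 1) mod m"
  have a: "a - 1 = K * m + r" "r < m" using m by (simp_all add: K_def r_def)
  have cp_ax: "cp p (a + x) = a + x + (a + x - 1) div m" for x
    using cp_eq[OF assms(1), of "a + x"] assms(2) by (simp add: m_def)
  show "m - r \<le> p" using m by simp
  show "\<forall>x\<in>{0..<m - r}. cp p (a + x) = a + x + K"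
  proof
    fix x assume "x \<in> {0..<m - r}"
    have "a + x - 1 = r + x + K * m" using a(1) assms(2) by linarith
    then have "(a + x - 1) div m = (r + x + K * m) div m" by simp
    also have "\<dots> = K" using \<open>x \<in> {0..<m - r}\<close> m(1) by simp
    finally show "cp p (a + x) = a + x + K" by (simp add: cp_ax)
  qed
  show "\<forall>x\<in>{m - r..<p}. cp p (a + x) = a + x + (K + 1)"
  proof
    fix x assume "x \<in> {m - r..<p}"
    have "a + x - 1 = r + x - m + (K + 1) * m" using a assms(2) \<open>x \<in> {m - r..<p}\<close> by auto
    then have "(a + x - 1) div m = (r + x - m + (K + 1) * m) div m" by simp
    also have "\<dots> = K + 1"
    proof -
      have "r + x - m < m" using \<open>x \<in> {m - r..<p}\<close> a(2) m by auto
      then show ?thesis using m div_mult_self1[of m "r + x - m" "K + 1"] by simp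
    qed
    finally show "cp p (a + x) = a + x + (K + 1)" by (simp add: cp_ax)
  qed
qed

lemma two_card_cp_solutions_le:
  assumes "prime p"
  shows "2 * card (cp_solutions p q a {0..<p}) \<le> p + 1"
proof -
  let ?A = "cp_solutions p q a {0..<p}"
  have "{1..<2::nat} = {1}" by auto
  then have "(\<Sum>j\<in>{1..<2}. card {x \<in> ?A. x + j \<in> ?A}) = card {x \<in> ?A. x + 1 \<in> ?A}"
    by simp
  also have "{x \<in> ?A. x + 1 \<in> ?A} = {}"
    using cp_solutions_not_consecutive[OF assms] by blast
  finally have "(\<Sum>j\<in>{1..<2}. card {x \<in> ?A. x + j \<in> ?A}) = 0" by simp
  moreover have "2 * card ?A \<le> p + 2 - 1 + 2 * (\<Sum>j\<in>{1..<2}. card {x \<in> ?A. x + j \<in> ?A})"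
    by (rule card_le_window_plus_pairs[of _ 0]) (auto simp: cp_solutions_def)
  ultimately show ?thesis by simp
qed

lemma card_cp_solutions_le:
  assumes p: "prime p" and "0 < a" "0 < T"
  shows "T * card (cp_solutions p q a {0..<p}) + 2 \<le> p + 2 * T + T * ((T - 1) * (T - 2))"
proof -
  obtain b K where b: "b \<le> p"
    and low: "\<forall>x\<in>{0..<0 + b}. cp p (a + x) = a + x + K"
    and high: "\<forall>x\<in>{b..<b + (p - b)}. cp p (a + x) = a + x + (K + 1)"
    using cp_window_split[OF prime_ge_2_nat[OF p] assms(2)] by auto
  have "cp_solutions p q a {0..<p} = cp_solutions p q a {0..<0 + b} \<union> cp_solutions p q a {b..<b + (p - b)}"
    using b by (auto simp: cp_solutions_def)
  moreover have "cp_solutions p q a {0..<0 + b} \<inter> cp_solutions p q a {b..<b + (p - b)} = {}"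
    by (auto simp: cp_solutions_def)
  ultimately have "card (cp_solutions p q a {0..<p})
      = card (cp_solutions p q a {0..<0 + b}) + card (cp_solutions p q a {b..<b + (p - b)})"
    by (simp add: card_Un_disjoint cp_solutions_def)
  moreover have "2 * (T * card (cp_solutions p q a {0..<0 + b})) \<le> 2 * (b + T - 1) + T * ((T - 1) * (T - 2))"
    using card_cp_solutions_window_le[OF p b assms(3) low] .
  moreover have "2 * (T * card (cp_solutions p q a {b..<b + (p - b)}))
      \<le> 2 * (p - b + T - 1) + T * ((T - 1) * (T - 2))"
    using card_cp_solutions_window_le[OF p _ assms(3) high] by simp
  ultimately show ?thesis
    using b assms(3) by (simp add: algebra_simps)
qed

lemma small_pow6_lt_pow5:
  fixes N :: nat
  assumes "N < 16"
  shows "N ^ 6 < (max (2 * N - 1) (max (3 * N - 10) 2)) ^ 5"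
proof -
  have "N = 0 \<or> N = 1 \<or> N = 2 \<or> N = 3 \<or> N = 4 \<or> N = 5 \<or> N = 6 \<or> N = 7 \<or> N = 8
    \<or> N = 9 \<or> N = 10 \<or> N = 11 \<or> N = 12 \<or> N = 13 \<or> N = 14 \<or> N = 15"
    using assms by arith
  then show ?thesis by (elim disjE) (simp_all add: numeral_2_eq_2[symmetric])
qed

lemma fifth_power_dominates:
  fixes s :: nat
  assumes "4 \<le> s"
  shows "32 * (4 + 2 * (s * (s - 1))) < s ^ 5"
proof -
  have "32 * (4 + 2 * (s * (s - 1))) < 64 * s ^ 2"
    using assms by (cases s) (auto simp: power2_eq_square algebra_simps)
  also have "\<dots> \<le> s ^ 3 * s ^ 2"
    using mult_right_mono[OF power_mono[OF assms, of 3], of "s ^ 2"] by simp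
  finally show ?thesis by (simp flip: power_add)
qed

lemma pow6_lt_pow5_of_window_bound:
  fixes N p :: nat
  assumes "16 \<le> N"
    and window: "\<And>T. 0 < T \<Longrightarrow> T * N + 2 \<le> p + 2 * T + T * ((T - 1) * (T - 2))"
  shows "N ^ 6 < p ^ 5"
proof (rule ccontr)
  assume contra: "\<not> N ^ 6 < p ^ 5"
  \<comment> \<open>Take \<open>T = s + 1 \<approx> (32 N)\<^sup>1\<^sup>/\<^sup>5\<close>, where \<open>p / T\<close> and \<open>T\<^sup>2\<close> balance.\<close>
  have "\<not> 32 * N \<le> 0 ^ 5" using assms(1) by simp
  moreover have "32 * N \<le> (32 * N) ^ 5" using assms(1) by (intro self_le_power) auto
  ultimately obtain s where s: "\<not> 32 * N \<le> s ^ 5" "32 * N \<le> Suc s ^ 5"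
    using exists_least_lemma[of "\<lambda>k. 32 * N \<le> k ^ 5"] by blast
  have "(2 * p) ^ 5 = 32 * p ^ 5" by simp
  also have "\<dots> \<le> 32 * N * N ^ 5" using contra by (simp add: power_Suc[symmetric])
  also have "\<dots> \<le> Suc s ^ 5 * N ^ 5" using s(2) by (rule mult_right_mono) simp
  also have "\<dots> = (Suc s * N) ^ 5" by (simp only: power_mult_distrib)
  finally have "2 * p \<le> Suc s * N" using power_mono_iff[of "2 * p" "Suc s * N" 5] by simp
  moreover have "Suc s * N + 2 \<le> p + 2 * Suc s + Suc s * (s * (s - 1))"
    using window[of "Suc s"] by simp
  moreover have "Suc s * (4 + 2 * (s * (s - 1))) = 4 * Suc s + 2 * (Suc s * (s * (s - 1)))"
    by (simp add: algebra_simps)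
  ultimately have "Suc s * N < Suc s * (4 + 2 * (s * (s - 1)))" by linarith
  then have N: "N < 4 + 2 * (s * (s - 1))" by (simp only: mult_less_cancel1)
  show False
  proof (cases "4 \<le> s")
    case True
    have "s ^ 5 < 32 * N" using s(1) by simp
    also have "\<dots> < 32 * (4 + 2 * (s * (s - 1)))" using N by (simp only: mult_less_cancel1) simp
    finally show False using fifth_power_dominates[OF True] by simp
  next
    case False
    then have "s \<in> {0, 1, 2, 3}" by auto
    then show False using N assms(1) by auto
  qed
qed

lemma pow6_lt_pow5_of_bounds:
  fixes N p :: nat
  assumes p: "2 \<le> p" and two: "2 * N \<le> p + 1"
    and window: "\<And>T. 0 < T \<Longrightarrow> T * N + 2 \<le> p + 2 * T + T * ((T - 1) * (T - 2))"
  shows "N ^ 6 < p ^ 5"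
proof (cases "N < 16")
  case True
  have "3 * N + 2 \<le> p + 12" using window[of 3] by simp
  then have "max (2 * N - 1) (max (3 * N - 10) 2) \<le> p" using two p by auto
  then have "(max (2 * N - 1) (max (3 * N - 10) 2)) ^ 5 \<le> p ^ 5" by (rule power_mono) simp
  then show ?thesis using small_pow6_lt_pow5[OF True] by linarith
next
  case False
  then show ?thesis using pow6_lt_pow5_of_window_bound window by simp
qed

lemma real_lt_powr_of_pow6_lt_pow5:
  fixes N p :: nat
  assumes "N ^ 6 < p ^ 5"
  shows "real N < real p powr 0.835"
proof (rule ccontr)
  assume "\<not> real N < real p powr 0.835"
  then have N: "real p powr 0.835 \<le> real N" by simp
  have "p > 0" using assms by (cases p) simp_all
  then have "real p ^ 5 = real p powr 5"
    using powr_realpow[of "real p" 5] by simp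
  also have "\<dots> \<le> real p powr (6 * 0.835)"
    using \<open>p > 0\<close> by (intro powr_mono) auto
  also have "\<dots> = (real p powr 0.835) ^ 6"
    using \<open>p > 0\<close> powr_power[of "real p" "0.835" 6] by simp
  also have "\<dots> \<le> real N ^ 6" using N by (simp add: power_mono)
  finally have "p ^ 5 \<le> N ^ 6" by (simp only: of_nat_power[symmetric] of_nat_le_iff)
  then show False using assms by simp
qed

theorem lemma3p4:
  fixes p :: nat and q :: rat and a :: nat
  assumes "prime p" and "a > 0"
  shows "real (card {d \<in> {0..p - 1}.
            rat_cong_p (\<Sum>i = a..a + d. 1 / of_nat (cp p i)) q p})
         < real p powr 0.835"
proof -
  have "{0..p - 1} = {0..<p}" using prime_gt_0_nat[OF assms(1)] by auto
  then have "{d \<in> {0..p - 1}. rat_cong_p (\<Sum>i = a..a + d. 1 / of_nat (cp p i)) q p}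
      = cp_solutions p q a {0..<p}"
    by (simp add: cp_solutions_def cp_sum_def)
  moreover have "card (cp_solutions p q a {0..<p}) ^ 6 < p ^ 5"
    using pow6_lt_pow5_of_bounds[OF prime_ge_2_nat two_card_cp_solutions_le card_cp_solutions_le]
      assms by blast
  ultimately show ?thesis
    using real_lt_powr_of_pow6_lt_pow5 by simp
qed

end
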